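(* Let $l,m\in\mathbb N$ and $f:[l]\to[m]$. If $l<m$ and $f$ is injective, then $\mathcal H_Ef:\mathcal H_E[l]\to\mathcal H_E[m]$ is an isometry. If $l=m$ and $f$ is bijective, then $\mathcal H_Ef$ is a unitary operator on $\mathcal H_E[l]$.
   Context: $\mathsf R\neq0$ is a finite additive commutative monoid; $\mathcal H_1$ is a finite-dimensional Hilbert space with orthonormal basis $|z\rangle_1$, $z\in\mathsf R$. $\mathbb N=\{0,1,2,\dots\}$, $[l]=\{0,\dots,l-1\}$. $E[l]=\mathsf R^l$; for $f:[l]\to[m]$, $Ef(x)_s=\sum_{r\in[l],f(r)=s}x_r$ (empty sum $=0$). $\mathcal H_E[l]=\mathcal H_1^{\otimes l}$ ($\mathcal H_E[0]=\mathbb C$) with orthonormal basis $|x\rangle=|x_0\rangle_1\otimes\cdots\otimes|x_{l-1}\rangle_1$, $x\in E[l]$, and $\mathcal H_Ef=\sum_{x\in E[l]}|Ef(x)\rangle\langle x|$, i.e. the linear map with $\mathcal H_Ef|x\rangle=|Ef(x)\rangle$. *)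

theory Defs
  imports Complex_Main
begin

text \<open>Elements of E[l] = R^l, represented as functions nat => R that vanish
  outside [l] = {0..<l}.\<close>
definition E_obj :: "nat \<Rightarrow> (nat \<Rightarrow> 'r::comm_monoid_add) set" where
  "E_obj l = {x. \<forall>i. l \<le> i \<longrightarrow> x i = 0}"

definition E_map :: "nat \<Rightarrow> (nat \<Rightarrow> nat) \<Rightarrow> (nat \<Rightarrow> 'r::comm_monoid_add) \<Rightarrow> (nat \<Rightarrow> 'r)" where
  "E_map l f x = (\<lambda>s. \<Sum>r\<in>{r. r < l \<and> f r = s}. x r)"

text \<open>H_E[l] = H_1^{tensor l}, identified with complex functions on the
  orthonormal basis |x>, x in E[l] (vanishing off E[l]).\<close>
definition HE :: "nat \<Rightarrow> ((nat \<Rightarrow> 'r::{comm_monoid_add,finite}) \<Rightarrow> complex) set" where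
  "HE l = {\<psi>. \<forall>x. x \<notin> E_obj l \<longrightarrow> \<psi> x = 0}"

definition HE_inner :: "nat \<Rightarrow> ((nat \<Rightarrow> 'r::{comm_monoid_add,finite}) \<Rightarrow> complex)
    \<Rightarrow> ((nat \<Rightarrow> 'r) \<Rightarrow> complex) \<Rightarrow> complex" where
  "HE_inner l \<psi> \<phi> = (\<Sum>x\<in>E_obj l. cnj (\<psi> x) * \<phi> x)"

text \<open>H_E f = sum_x |E f x><x|, i.e. the linear map with |x> |-> |E f x>.\<close>
definition HE_map :: "nat \<Rightarrow> (nat \<Rightarrow> nat) \<Rightarrow> ((nat \<Rightarrow> 'r::{comm_monoid_add,finite}) \<Rightarrow> complex)
    \<Rightarrow> ((nat \<Rightarrow> 'r) \<Rightarrow> complex)" where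
  "HE_map l f \<psi> = (\<lambda>y. \<Sum>x\<in>E_obj l. if E_map l f x = y then \<psi> x else 0)"

definition is_isometry :: "nat \<Rightarrow> nat \<Rightarrow> (((nat \<Rightarrow> 'r::{comm_monoid_add,finite}) \<Rightarrow> complex)
    \<Rightarrow> ((nat \<Rightarrow> 'r) \<Rightarrow> complex)) \<Rightarrow> bool" where
  "is_isometry l m T \<longleftrightarrow>
     (\<forall>\<psi>\<in>HE l. T \<psi> \<in> HE m) \<and>
     (\<forall>\<psi>\<in>HE l. \<forall>\<phi>\<in>HE l. \<forall>a b. T (\<lambda>x. a * \<psi> x + b * \<phi> x) = (\<lambda>y. a * T \<psi> y + b * T \<phi> y)) \<and>
     (\<forall>\<psi>\<in>HE l. \<forall>\<phi>\<in>HE l. HE_inner m (T \<psi>) (T \<phi>) = HE_inner l \<psi> \<phi>)"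

definition is_unitary :: "nat \<Rightarrow> (((nat \<Rightarrow> 'r::{comm_monoid_add,finite}) \<Rightarrow> complex)
    \<Rightarrow> ((nat \<Rightarrow> 'r) \<Rightarrow> complex)) \<Rightarrow> bool" where
  "is_unitary l T \<longleftrightarrow> is_isometry l l T \<and> T ` HE l = HE l"

end

theory Submission
  imports Defs
begin

text \<open>If \<open>f\<close> is injective on \<open>[l]\<close>, the coordinate \<open>x\<^sub>r\<close> can be read off from \<open>E f x\<close> at \<open>f r\<close>,
  so \<open>E f\<close> is injective on \<open>E[l]\<close>. Hence \<open>H\<^sub>E f\<close> maps the orthonormal basis \<open>|x\<rangle>\<close> injectively
  onto part of the orthonormal basis of \<open>H\<^sub>E[m]\<close>, and is therefore an isometry. If moreover
  \<open>l = m\<close>, then \<open>E f\<close> is an injective self-map of the finite set \<open>E[l]\<close>, hence a permutation,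
  and \<open>H\<^sub>E f\<close> permutes the basis, so it is unitary.\<close>

lemma finite_E_obj: "finite (E_obj l :: (nat \<Rightarrow> 'r::{comm_monoid_add,finite}) set)"
proof -
  have "E_obj l = {x :: nat \<Rightarrow> 'r. \<forall>i. (i \<in> {..<l} \<longrightarrow> x i \<in> UNIV) \<and> (i \<notin> {..<l} \<longrightarrow> x i = 0)}"
    by (auto simp: E_obj_def)
  also have "finite \<dots>"
    by (rule finite_set_of_finite_funs) auto
  finally show ?thesis .
qed

lemma E_map_in_E_obj:
  assumes "f ` {..<l} \<subseteq> {..<m}"
  shows "E_map l f x \<in> E_obj m"
proof -
  have "{r. r < l \<and> f r = i} = {}" if "m \<le> i" for i
    using assms that by fastforce
  then show ?thesis
    unfolding E_obj_def E_map_def by (simp del: Collect_empty_eq)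
qed

lemma E_map_apply_image:
  assumes "inj_on f {..<l}" and "r < l"
  shows "E_map l f x (f r) = x r"
proof -
  have "{r'. r' < l \<and> f r' = f r} = {r}"
    using assms by (auto simp: inj_on_def)
  then show ?thesis
    by (simp add: E_map_def)
qed

lemma inj_on_E_map:
  assumes "inj_on f {..<l}"
  shows "inj_on (E_map l f) (E_obj l)"
proof
  fix x y
  assume x: "x \<in> E_obj l" and y: "y \<in> E_obj l" and eq: "E_map l f x = E_map l f y"
  show "x = y"
  proof
    fix i
    show "x i = y i"
    proof (cases "i < l")
      case True
      then show ?thesis
        using eq E_map_apply_image[OF assms True] by metis
    next
      case False
      then show ?thesis
        using x y by (simp add: E_obj_def)
    qed
  qed
qed

lemma E_map_image_E_obj:
  assumes "inj_on f {..<l}" and "f ` {..<l} \<subseteq> {..<l}"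
  shows "E_map l f ` E_obj l = (E_obj l :: (nat \<Rightarrow> 'r::{comm_monoid_add,finite}) set)"
  using finite_E_obj E_map_in_E_obj[OF assms(2)] inj_on_E_map[OF assms(1)]
  by (intro endo_inj_surj) auto

lemma HE_map_linear:
  "HE_map l f (\<lambda>x. a * \<psi> x + b * \<phi> x) = (\<lambda>y. a * HE_map l f \<psi> y + b * HE_map l f \<phi> y)"
  unfolding HE_map_def sum_distrib_left sum.distrib[symmetric]
  by (intro ext sum.cong) auto

lemma HE_map_apply_E_map:
  assumes "inj_on f {..<l}" and "x\<^sub>0 \<in> E_obj l"
  shows "HE_map l f \<psi> (E_map l f x\<^sub>0) = \<psi> x\<^sub>0"
proof -
  have "HE_map l f \<psi> (E_map l f x\<^sub>0) = (\<Sum>x\<in>E_obj l. if x = x\<^sub>0 then \<psi> x else 0)"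
    unfolding HE_map_def
    using inj_on_E_map[OF assms(1)] assms(2) by (intro sum.cong) (auto simp: inj_on_def)
  also have "\<dots> = \<psi> x\<^sub>0"
    using assms(2) by (simp add: finite_E_obj)
  finally show ?thesis .
qed

lemma HE_map_outside_image:
  assumes "y \<notin> E_map l f ` E_obj l"
  shows "HE_map l f \<psi> y = 0"
  using assms unfolding HE_map_def by (intro sum.neutral) auto

lemma HE_map_in_HE:
  assumes "f ` {..<l} \<subseteq> {..<m}"
  shows "HE_map l f \<psi> \<in> HE m"
  using E_map_in_E_obj[OF assms] by (auto simp: HE_def intro!: HE_map_outside_image)

lemma HE_inner_HE_map:
  assumes "inj_on f {..<l}" and "f ` {..<l} \<subseteq> {..<m}"
  shows "HE_inner m (HE_map l f \<psi>) (HE_map l f \<phi>) = HE_inner l \<psi> \<phi>"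
proof -
  let ?g = "E_map l f"
  have "HE_inner m (HE_map l f \<psi>) (HE_map l f \<phi>)
      = (\<Sum>y\<in>?g ` E_obj l. cnj (HE_map l f \<psi> y) * HE_map l f \<phi> y)"
    unfolding HE_inner_def
    using finite_E_obj E_map_in_E_obj[OF assms(2)]
    by (intro sum.mono_neutral_right) (auto simp: HE_map_outside_image)
  also have "\<dots> = (\<Sum>x\<in>E_obj l. cnj (HE_map l f \<psi> (?g x)) * HE_map l f \<phi> (?g x))"
    using sum.reindex[OF inj_on_E_map[OF assms(1)]] by (simp add: comp_def)
  also have "\<dots> = HE_inner l \<psi> \<phi>"
    unfolding HE_inner_def by (intro sum.cong) (simp_all add: HE_map_apply_E_map[OF assms(1)])
  finally show ?thesis .
qed

lemma is_isometry_HE_map: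
  assumes "inj_on f {..<l}" and "f ` {..<l} \<subseteq> {..<m}"
  shows "is_isometry l m (HE_map l f :: ((nat \<Rightarrow> 'r::{comm_monoid_add,finite}) \<Rightarrow> complex) \<Rightarrow> _)"
  unfolding is_isometry_def
  using HE_map_in_HE[OF assms(2)] HE_map_linear HE_inner_HE_map[OF assms] by blast

lemma HE_map_image_HE:
  assumes "inj_on f {..<l}" and "f ` {..<l} \<subseteq> {..<l}"
  shows "HE_map l f ` HE l = (HE l :: ((nat \<Rightarrow> 'r::{comm_monoid_add,finite}) \<Rightarrow> complex) set)"
proof
  show "HE_map l f ` HE l \<subseteq> (HE l :: ((nat \<Rightarrow> 'r) \<Rightarrow> complex) set)"
    using HE_map_in_HE[OF assms(2)] by blast
next
  show "(HE l :: ((nat \<Rightarrow> 'r) \<Rightarrow> complex) set) \<subseteq> HE_map l f ` HE l"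
  proof
    fix \<phi> :: "(nat \<Rightarrow> 'r) \<Rightarrow> complex"
    assume \<phi>: "\<phi> \<in> HE l"
    define \<psi> where "\<psi> x = (if x \<in> E_obj l then \<phi> (E_map l f x) else 0)" for x
    have "HE_map l f \<psi> y = \<phi> y" for y
    proof (cases "y \<in> E_obj l")
      case True
      then obtain x where "x \<in> E_obj l" and "y = E_map l f x"
        using E_map_image_E_obj[OF assms] by blast
      then show ?thesis
        using HE_map_apply_E_map[OF assms(1), of x \<psi>] by (simp add: \<psi>_def)
    next
      case False
      then have "HE_map l f \<psi> y = 0"
        using E_map_image_E_obj[OF assms, where 'r='r] by (intro HE_map_outside_image) simp
      then show ?thesis
        using False \<phi> by (simp add: HE_def)
    qed
    moreover have "\<psi> \<in> HE l"
      by (simp add: HE_def \<psi>_def)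
    ultimately show "\<phi> \<in> HE_map l f ` HE l"
      by (metis image_eqI ext)
  qed
qed

theorem proposition4p10:
  fixes l m :: nat and f :: "nat \<Rightarrow> nat"
  assumes R_nontrivial: "\<exists>z::'r::{comm_monoid_add,finite}. z \<noteq> 0"
    and f_maps: "f ` {..<l} \<subseteq> {..<m}"
  shows "(l < m \<and> inj_on f {..<l} \<longrightarrow> is_isometry l m (HE_map l f :: ((nat \<Rightarrow> 'r) \<Rightarrow> complex) \<Rightarrow> _))
       \<and> (l = m \<and> bij_betw f {..<l} {..<m} \<longrightarrow> is_unitary l (HE_map l f :: ((nat \<Rightarrow> 'r) \<Rightarrow> complex) \<Rightarrow> _))"
proof (intro conjI impI)
  assume "l < m \<and> inj_on f {..<l}"
  then show "is_isometry l m (HE_map l f :: ((nat \<Rightarrow> 'r) \<Rightarrow> complex) \<Rightarrow> _)"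
    using is_isometry_HE_map f_maps by blast
next
  assume "l = m \<and> bij_betw f {..<l} {..<m}"
  then have inj: "inj_on f {..<l}" and endo: "f ` {..<l} \<subseteq> {..<l}"
    using f_maps by (auto simp: bij_betw_def)
  show "is_unitary l (HE_map l f :: ((nat \<Rightarrow> 'r) \<Rightarrow> complex) \<Rightarrow> _)"
    unfolding is_unitary_def
    using is_isometry_HE_map[OF inj endo] HE_map_image_HE[OF inj endo] by blast
qed

end
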